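(* Let $S=\langle P,\varphi\rangle$ be a SUT model, $t$ a strength, $N\ge1$ an integer and $lb$ an integer with $0\le lb<CAN(t,S)$ and $lb+1\le N$. Let $m=N-(lb+1)$ be the number of variables $u_i$, and consider the Weighted Partial MaxSAT instance $\Psi$ defined in the context. If $N\ge CAN(t,S)$, the optimal cost of $\Psi$ is $CAN(t,S)-(lb+1)+(|\mathcal T_a|-T(N;t,S))\cdot(m+1)$; otherwise it is $N-(lb+1)+(|\mathcal T_a|-T(N;t,S))\cdot(m+1)$.
   Context: A SUT model is $S=\langle P,\varphi\rangle$, where $P$ is a finite set of parameters, each $p\in P$ having a finite nonempty domain $d(p)$, and $\varphi$ is a propositional formula whose atoms have the form $(p=v)$ with $p\in P$, $v\in d(p)$. A test case is a full assignment $A$ giving each $p$ a value in $d(p)$ such that $\varphi$ is true when each atom $(p=v)$ is read as true iff $A(p)=v$; it is assumed that at least one test case exists. Fix a strength $t$ with $1\le t\le|P|$. A $t$-tuple is an assignment of values to exactly $t$ distinct parameters, viewed as a set of pairs $(p,v)$; a test case covers $\tau$ if it assigns $v$ to $p$ for every $(p,v)\in\tau$. A $t$-tuple is allowed if some test case covers it; $\mathcal T_a$ is the set of allowed $t$-tuples. A covering array $CA(N;t,S)$ is a list of $N$ test cases (repetitions allowed) covering every allowed $t$-tuple; $CAN(t,S)$ is the minimum such $N$. $T(N;t,S)$ is the maximum number of $t$-tuples covered by a list of $N$ test cases. $[N]=\{1,\dots,N\}$. A Weighted Partial MaxSAT instance consists of hard constraints and soft clauses $(c,w)$ with positive integer weights;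 its optimal cost is the minimum, over truth assignments satisfying all hard constraints, of the total weight of falsified soft clauses ($\infty$ if the hard constraints are unsatisfiable). Variables: $x_{i,p,v}$ ($i\in[N]$, $p\in P$, $v\in d(p)$), $c^i_\tau$ ($i\in\{0,\dots,N\}$, $\tau\in\mathcal T_a$), $u_i$ ($i\in\{lb+2,\dots,N\}$). Hard constraints of $\Psi$: (X) for every $i\in[N]$, $p\in P$: exactly one of $\{x_{i,p,v}:v\in d(p)\}$ is true; (SUTX) for every $i\in[N]$: the formula obtained from $\varphi$ by replacing each atom $(p=v)$ with $x_{i,p,v}$; (a) for every $i\in[N]$, $\tau\in\mathcal T_a$, $(p,v)\in\tau$: $c^i_\tau\rightarrow(c^{i-1}_\tau\vee x_{i,p,v})$; (c) for every $\tau\in\mathcal T_a$: $c^N_\tau\rightarrow\neg c^0_\tau$; (BSU) for every $i\in\{lb+2,\dots,N-1\}$: $u_{i+1}\rightarrow u_i$; (CCU) for every $i\in\{lb+2,\dots,N\}$, $\tau\in\mathcal T_a$: $\neg c^{i-1}_\tau\rightarrow u_i$. Soft clauses: $(\neg u_i,1)$ for every $i\in\{lb+2,\dots,N\}$, and $(c^N_\tau,m+1)$ for every $\tau\in\mathcal T_a$. *)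

theory Defs
  imports Main "HOL-Library.FuncSet" "HOL-Library.Extended_Nat"
begin

datatype 'a pform =
    PAtom 'a | PTrue | PFalse | PNot "'a pform"
  | PAnd "'a pform" "'a pform" | POr "'a pform" "'a pform"
  | PImp "'a pform" "'a pform" | PIff "'a pform" "'a pform"

fun peval :: "('a \<Rightarrow> bool) \<Rightarrow> 'a pform \<Rightarrow> bool" where
  "peval I (PAtom a) = I a"
| "peval I PTrue = True"
| "peval I PFalse = False"
| "peval I (PNot f) = (\<not> peval I f)"
| "peval I (PAnd f g) = (peval I f \<and> peval I g)"
| "peval I (POr f g) = (peval I f \<or> peval I g)"
| "peval I (PImp f g) = (peval I f \<longrightarrow> peval I g)"
| "peval I (PIff f g) = (peval I f \<longleftrightarrow> peval I g)"

text \<open>A SUT model is given by a parameter set P, domains d, and a formula phi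
  whose atoms are pairs (p,v) standing for the atom (p = v).\<close>

definition sut_model :: "'p set \<Rightarrow> ('p \<Rightarrow> 'v set) \<Rightarrow> ('p \<times> 'v) pform \<Rightarrow> bool" where
  "sut_model P d phi \<longleftrightarrow> finite P \<and> (\<forall>p\<in>P. finite (d p) \<and> d p \<noteq> {})
     \<and> set_pform phi \<subseteq> Sigma P d"

definition test_cases :: "'p set \<Rightarrow> ('p \<Rightarrow> 'v set) \<Rightarrow> ('p \<times> 'v) pform \<Rightarrow> ('p \<Rightarrow> 'v) set" where
  "test_cases P d phi = {A \<in> PiE P d. peval (\<lambda>(p, v). A p = v) phi}"

definition is_tuple :: "'p set \<Rightarrow> ('p \<Rightarrow> 'v set) \<Rightarrow> nat \<Rightarrow> ('p \<times> 'v) set \<Rightarrow> bool" where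
  "is_tuple P d t tau \<longleftrightarrow> finite tau \<and> tau \<subseteq> Sigma P d \<and> inj_on fst tau \<and> card tau = t"

definition covers :: "('p \<Rightarrow> 'v) \<Rightarrow> ('p \<times> 'v) set \<Rightarrow> bool" where
  "covers A tau \<longleftrightarrow> (\<forall>(p, v)\<in>tau. A p = v)"

definition allowed_tuples :: "'p set \<Rightarrow> ('p \<Rightarrow> 'v set) \<Rightarrow> ('p \<times> 'v) pform \<Rightarrow> nat \<Rightarrow> ('p \<times> 'v) set set" where
  "allowed_tuples P d phi t = {tau. is_tuple P d t tau \<and> (\<exists>A\<in>test_cases P d phi. covers A tau)}"

definition is_CA :: "'p set \<Rightarrow> ('p \<Rightarrow> 'v set) \<Rightarrow> ('p \<times> 'v) pform \<Rightarrow> nat \<Rightarrow> ('p \<Rightarrow> 'v) list \<Rightarrow> bool" where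
  "is_CA P d phi t L \<longleftrightarrow> set L \<subseteq> test_cases P d phi
     \<and> (\<forall>tau\<in>allowed_tuples P d phi t. \<exists>A\<in>set L. covers A tau)"

definition CAN :: "'p set \<Rightarrow> ('p \<Rightarrow> 'v set) \<Rightarrow> ('p \<times> 'v) pform \<Rightarrow> nat \<Rightarrow> nat" where
  "CAN P d phi t = (LEAST N. \<exists>L. length L = N \<and> is_CA P d phi t L)"

definition Tcov :: "'p set \<Rightarrow> ('p \<Rightarrow> 'v set) \<Rightarrow> ('p \<times> 'v) pform \<Rightarrow> nat \<Rightarrow> nat \<Rightarrow> nat" where
  "Tcov P d phi t N = Max {card {tau. is_tuple P d t tau \<and> (\<exists>A\<in>set L. covers A tau)} | L.
       length L = N \<and> set L \<subseteq> test_cases P d phi}"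

text \<open>Optimal cost is infinity if the
  hard constraints are unsatisfiable (Inf of the empty set in enat).\<close>
definition wpms_cost :: "(('x \<Rightarrow> bool) \<Rightarrow> bool) set \<Rightarrow> ((('x \<Rightarrow> bool) \<Rightarrow> bool) \<times> nat) set \<Rightarrow> enat" where
  "wpms_cost H S = (INF sigma \<in> {sigma. \<forall>h\<in>H. h sigma}.
       enat (\<Sum>cw\<in>{cw\<in>S. \<not> fst cw sigma}. snd cw))"

datatype ('p, 'v) var = X nat 'p 'v | C nat "('p \<times> 'v) set" | U nat

definition Psi_hard :: "'p set \<Rightarrow> ('p \<Rightarrow> 'v set) \<Rightarrow> ('p \<times> 'v) pform \<Rightarrow> nat \<Rightarrow> nat \<Rightarrow> nat
    \<Rightarrow> ((('p, 'v) var \<Rightarrow> bool) \<Rightarrow> bool) set" where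
  "Psi_hard P d phi t N lb =
     \<comment> \<open>(X)\<close>
     {(\<lambda>s. \<exists>!v. v \<in> d p \<and> s (X i p v)) | i p. i \<in> {1..N} \<and> p \<in> P}
     \<comment> \<open>(SUTX)\<close>
   \<union> {(\<lambda>s. peval (\<lambda>(p, v). s (X i p v)) phi) | i. i \<in> {1..N}}
     \<comment> \<open>(a)\<close>
   \<union> {(\<lambda>s. s (C i tau) \<longrightarrow> s (C (i - 1) tau) \<or> s (X i p v)) | i tau p v.
        i \<in> {1..N} \<and> tau \<in> allowed_tuples P d phi t \<and> (p, v) \<in> tau}
     \<comment> \<open>(c)\<close>
   \<union> {(\<lambda>s. s (C N tau) \<longrightarrow> \<not> s (C 0 tau)) | tau. tau \<in> allowed_tuples P d phi t}
     \<comment> \<open>(BSU)\<close>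
   \<union> {(\<lambda>s. s (U (i + 1)) \<longrightarrow> s (U i)) | i. i \<in> {lb + 2..N - 1}}
     \<comment> \<open>(CCU)\<close>
   \<union> {(\<lambda>s. \<not> s (C (i - 1) tau) \<longrightarrow> s (U i)) | i tau.
        i \<in> {lb + 2..N} \<and> tau \<in> allowed_tuples P d phi t}"

definition Psi_soft :: "'p set \<Rightarrow> ('p \<Rightarrow> 'v set) \<Rightarrow> ('p \<times> 'v) pform \<Rightarrow> nat \<Rightarrow> nat \<Rightarrow> nat
    \<Rightarrow> (((('p, 'v) var \<Rightarrow> bool) \<Rightarrow> bool) \<times> nat) set" where
  "Psi_soft P d phi t N lb =
     {((\<lambda>s. \<not> s (U i)), 1) | i. i \<in> {lb + 2..N}}
   \<union> {((\<lambda>s. s (C N tau)), N - (lb + 1) + 1) | tau. tau \<in> allowed_tuples P d phi t}"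

end

theory Submission
  imports Defs
begin

(* A list L of N test cases is encoded by reading row i off the variables X i p v, letting
   C i tau say that tau is covered by the first i rows, and making U i true iff i <= CAN.
   This falsifies min N CAN - (lb + 1) unit clauses and one clause of weight m + 1 per allowed
   tuple missed by L; for an optimal L, whose first CAN rows form a covering array when
   CAN <= N, these are |T_a| - T(N) tuples.
   Conversely, in a model of the hard constraints let j be the end of the initial run of
   true U's.  By (CCU) and the propagation clauses (a), every tuple whose soft clause C N
   holds is covered by the first j decoded rows.  If j >= CAN the U's already pay for
   CAN - (lb + 1); if j < min N CAN, the first j rows cover fewer than T(N) tuples, so one
   more clause of weight m + 1 is falsified, which outweighs all the U's. *)

lemma peval_cong: "(\<And>a. a \<in> set_pform f \<Longrightarrow> I a = J a) \<Longrightarrow> peval I f = peval J f"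
  by (induction f) auto

lemma maximal_run:
  fixes Q :: "nat \<Rightarrow> bool"
  assumes "a \<le> N"
  obtains j where "a \<le> j" "j \<le> N" "\<forall>k\<in>{a<..j}. Q k" "j < N \<Longrightarrow> \<not> Q (Suc j)"
  using assms
proof (induction N arbitrary: thesis)
  case 0
  then show ?case by force
next
  case (Suc N)
  show ?case
  proof (cases "a = Suc N")
    case True
    then show ?thesis using Suc.prems(1) by force
  next
    case False
    then obtain j
      where j: "a \<le> j" "j \<le> N" "\<forall>k\<in>{a<..j}. Q k" "j < N \<Longrightarrow> \<not> Q (Suc j)"
      using Suc by (metis le_SucE)
    show ?thesis
    proof (cases "j = N \<and> Q (Suc N)")
      case True
      with j show ?thesis by (intro Suc.prems(1)[of "Suc N"]) (auto simp: le_Suc_eq)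
    next
      case False
      with j show ?thesis by (intro Suc.prems(1)[of j]) (auto simp: less_Suc_eq)
    qed
  qed
qed

definition falsified_weight ::
    "((('x \<Rightarrow> bool) \<Rightarrow> bool) \<times> nat) set \<Rightarrow> ('x \<Rightarrow> bool) \<Rightarrow> nat" where
  "falsified_weight S sigma = (\<Sum>cw\<in>{cw\<in>S. \<not> fst cw sigma}. snd cw)"

lemma wpms_cost_eqI:
  assumes "\<forall>h\<in>H. h sigma" and "falsified_weight S sigma = c"
    and "\<And>sigma'. \<forall>h\<in>H. h sigma' \<Longrightarrow> c \<le> falsified_weight S sigma'"
  shows "wpms_cost H S = enat c"
  unfolding wpms_cost_def falsified_weight_def[symmetric]
proof (rule antisym)
  have "sigma \<in> {s. \<forall>h\<in>H. h s}" using assms(1) by simp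
  then show "(INF s\<in>{s. \<forall>h\<in>H. h s}. enat (falsified_weight S s)) \<le> enat c"
    unfolding assms(2)[symmetric] by (rule INF_lower)
  show "enat c \<le> (INF s\<in>{s. \<forall>h\<in>H. h s}. enat (falsified_weight S s))"
    by (rule INF_greatest) (simp add: assms(3))
qed

lemma satisfies_Psi_hard_iff:
  "(\<forall>h\<in>Psi_hard P d phi t N lb. h s) \<longleftrightarrow>
     (\<forall>i\<in>{1..N}. \<forall>p\<in>P. \<exists>!v. v \<in> d p \<and> s (X i p v))
   \<and> (\<forall>i\<in>{1..N}. peval (\<lambda>(p, v). s (X i p v)) phi)
   \<and> (\<forall>i\<in>{1..N}. \<forall>tau\<in>allowed_tuples P d phi t. \<forall>p v. (p, v) \<in> tau \<longrightarrow>
        s (C i tau) \<longrightarrow> s (C (i - 1) tau) \<or> s (X i p v))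
   \<and> (\<forall>tau\<in>allowed_tuples P d phi t. s (C N tau) \<longrightarrow> \<not> s (C 0 tau))
   \<and> (\<forall>i\<in>{lb + 2..N - 1}. s (U (i + 1)) \<longrightarrow> s (U i))
   \<and> (\<forall>i\<in>{lb + 2..N}. \<forall>tau\<in>allowed_tuples P d phi t.
        \<not> s (C (i - 1) tau) \<longrightarrow> s (U i))"
  (is "?sat \<longleftrightarrow> ?families")
proof
  assume ?sat
  then have member: "h s" if "h \<in> Psi_hard P d phi t N lb" for h
    using that by blast
  have "\<exists>!v. v \<in> d p \<and> s (X i p v)" if "i \<in> {1..N}" "p \<in> P" for i p
    using that by (intro member[of "\<lambda>s. \<exists>!v. v \<in> d p \<and> s (X i p v)"])
      (auto simp: Psi_hard_def)
  moreover have "peval (\<lambda>(p, v). s (X i p v)) phi" if "i \<in> {1..N}" for i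
    using that by (intro member[of "\<lambda>s. peval (\<lambda>(p, v). s (X i p v)) phi"])
      (auto simp: Psi_hard_def)
  moreover have "s (C i tau) \<longrightarrow> s (C (i - 1) tau) \<or> s (X i p v)"
    if "i \<in> {1..N}" "tau \<in> allowed_tuples P d phi t" "(p, v) \<in> tau" for i tau p v
    using that by (intro member[of "\<lambda>s. s (C i tau) \<longrightarrow> s (C (i - 1) tau) \<or> s (X i p v)"])
      (auto simp: Psi_hard_def)
  moreover have "s (C N tau) \<longrightarrow> \<not> s (C 0 tau)" if "tau \<in> allowed_tuples P d phi t" for tau
    using that by (intro member[of "\<lambda>s. s (C N tau) \<longrightarrow> \<not> s (C 0 tau)"])
      (auto simp: Psi_hard_def)
  moreover have "s (U (i + 1)) \<longrightarrow> s (U i)" if "i \<in> {lb + 2..N - 1}" for i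
    using that by (intro member[of "\<lambda>s. s (U (i + 1)) \<longrightarrow> s (U i)"])
      (auto simp: Psi_hard_def)
  moreover have "\<not> s (C (i - 1) tau) \<longrightarrow> s (U i)"
    if "i \<in> {lb + 2..N}" "tau \<in> allowed_tuples P d phi t" for i tau
    using that by (intro member[of "\<lambda>s. \<not> s (C (i - 1) tau) \<longrightarrow> s (U i)"])
      (auto simp: Psi_hard_def)
  ultimately show ?families by blast
next
  assume ?families
  then have X: "\<And>i p. i \<in> {1..N} \<Longrightarrow> p \<in> P \<Longrightarrow> \<exists>!v. v \<in> d p \<and> s (X i p v)"
    and SUTX: "\<And>i. i \<in> {1..N} \<Longrightarrow> peval (\<lambda>(p, v). s (X i p v)) phi"
    and a: "\<And>i tau p v. i \<in> {1..N} \<Longrightarrow> tau \<in> allowed_tuples P d phi t \<Longrightarrow>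
        (p, v) \<in> tau \<Longrightarrow> s (C i tau) \<longrightarrow> s (C (i - 1) tau) \<or> s (X i p v)"
    and c: "\<And>tau. tau \<in> allowed_tuples P d phi t \<Longrightarrow> s (C N tau) \<longrightarrow> \<not> s (C 0 tau)"
    and BSU: "\<And>i. i \<in> {lb + 2..N - 1} \<Longrightarrow> s (U (i + 1)) \<longrightarrow> s (U i)"
    and CCU: "\<And>i tau. i \<in> {lb + 2..N} \<Longrightarrow> tau \<in> allowed_tuples P d phi t \<Longrightarrow>
        \<not> s (C (i - 1) tau) \<longrightarrow> s (U i)"
    by auto
  show ?sat unfolding Psi_hard_def
    by (intro ballI, elim UnE CollectE exE conjE; hypsubst)
      (rule X SUTX a c BSU CCU; assumption)+
qed

definition covered_tuples ::
    "'p set \<Rightarrow> ('p \<Rightarrow> 'v set) \<Rightarrow> nat \<Rightarrow> ('p \<Rightarrow> 'v) list \<Rightarrow> ('p \<times> 'v) set set" where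
  "covered_tuples P d t L = {tau. is_tuple P d t tau \<and> (\<exists>A\<in>set L. covers A tau)}"

lemma covered_tuples_Nil [simp]: "covered_tuples P d t [] = {}"
  unfolding covered_tuples_def by simp

lemma covered_tuples_take_Suc:
  "i < length L \<Longrightarrow> covered_tuples P d t (take (Suc i) L) =
     covered_tuples P d t (take i L) \<union> {tau. is_tuple P d t tau \<and> covers (L ! i) tau}"
  unfolding covered_tuples_def by (auto simp: take_Suc_conv_app_nth)

lemma covered_tuples_mono:
  "set L \<subseteq> set L' \<Longrightarrow> covered_tuples P d t L \<subseteq> covered_tuples P d t L'"
  unfolding covered_tuples_def by auto

lemma covered_tuples_take_mono:
  "i \<le> j \<Longrightarrow> covered_tuples P d t (take i L) \<subseteq> covered_tuples P d t (take j L)"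
  by (intro covered_tuples_mono set_take_subset_set_take)

locale sut =
  fixes P :: "'p set" and d :: "'p \<Rightarrow> 'v set" and phi :: "('p \<times> 'v) pform" and t :: nat
  assumes sut_model: "sut_model P d phi" and test_cases_nonempty: "test_cases P d phi \<noteq> {}"
begin

abbreviation "TC \<equiv> test_cases P d phi"
abbreviation "Ta \<equiv> allowed_tuples P d phi t"
abbreviation "cov \<equiv> covered_tuples P d t"
abbreviation "can \<equiv> CAN P d phi t"
abbreviation "TN \<equiv> Tcov P d phi t"

lemma finite_allowed_tuples: "finite Ta"
proof (rule finite_subset)
  show "Ta \<subseteq> Pow (Sigma P d)" unfolding allowed_tuples_def is_tuple_def by auto
  show "finite (Pow (Sigma P d))" using sut_model unfolding sut_model_def by auto
qed

lemma finite_test_cases: "finite TC"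
proof (rule finite_subset)
  show "TC \<subseteq> PiE P d" unfolding test_cases_def by auto
  show "finite (PiE P d)" using sut_model unfolding sut_model_def by (intro finite_PiE) auto
qed

lemma covered_tuples_subset: "set L \<subseteq> TC \<Longrightarrow> cov L \<subseteq> Ta"
  unfolding covered_tuples_def allowed_tuples_def by auto

lemma card_covered_tuples_le: "set L \<subseteq> TC \<Longrightarrow> card (cov L) \<le> card Ta"
  by (rule card_mono[OF finite_allowed_tuples covered_tuples_subset])

lemma is_CA_iff: "set L \<subseteq> TC \<Longrightarrow> is_CA P d phi t L \<longleftrightarrow> Ta \<subseteq> cov L"
  unfolding is_CA_def covered_tuples_def allowed_tuples_def by auto

lemma CAN_attained: "\<exists>L. length L = can \<and> is_CA P d phi t L"
proof -
  obtain L where L: "set L = TC" using finite_test_cases finite_list by blast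
  then have "is_CA P d phi t L"
    by (simp add: is_CA_iff) (auto simp: covered_tuples_def allowed_tuples_def)
  then have "\<exists>N L. length L = N \<and> is_CA P d phi t L" by blast
  then show ?thesis unfolding CAN_def by (rule LeastI_ex)
qed

lemma CAN_le_length: "is_CA P d phi t L \<Longrightarrow> can \<le> length L"
  unfolding CAN_def by (rule Least_le) blast

lemma Tcov_eq_Max: "TN N = Max {card (cov L) | L. length L = N \<and> set L \<subseteq> TC}"
  unfolding Tcov_def covered_tuples_def ..

lemma Tcov_attained: "\<exists>L. length L = N \<and> set L \<subseteq> TC \<and> card (cov L) = TN N"
proof -
  let ?T = "{card (cov L) | L. length L = N \<and> set L \<subseteq> TC}"
  have "?T \<subseteq> {..card Ta}" using card_covered_tuples_le by auto
  then have "finite ?T" by (rule finite_subset) simp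
  moreover obtain A where "A \<in> TC" using test_cases_nonempty by blast
  then have "card (cov (replicate N A)) \<in> ?T" by auto
  ultimately have "TN N \<in> ?T" unfolding Tcov_eq_Max by (intro Max_in) auto
  then show ?thesis by auto
qed

lemma card_covered_tuples_le_Tcov:
  "length L = N \<Longrightarrow> set L \<subseteq> TC \<Longrightarrow> card (cov L) \<le> TN N"
  unfolding Tcov_eq_Max
  by (rule Max_ge) (auto intro: finite_subset[of _ "{..card Ta}"] dest: card_covered_tuples_le)

lemma Tcov_le_card: "TN N \<le> card Ta"
  using Tcov_attained card_covered_tuples_le by metis

lemma padded_covering_array:
  assumes "can \<le> N"
  obtains L where "length L = N" "set L \<subseteq> TC" "Ta \<subseteq> cov (take can L)"
proof -
  obtain L0 where L0: "length L0 = can" "is_CA P d phi t L0" using CAN_attained by blast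
  have "Ta \<subseteq> cov L0" using L0(2) is_CA_iff is_CA_def by blast
  obtain A where "A \<in> TC" using test_cases_nonempty by blast
  with L0 assms \<open>Ta \<subseteq> cov L0\<close> show thesis
    by (intro that[of "L0 @ replicate (N - can) A"]) (auto simp: is_CA_def)
qed

lemma Tcov_eq_card_if_CAN_le:
  assumes "can \<le> N"
  shows "TN N = card Ta"
proof -
  obtain L where L: "length L = N" "set L \<subseteq> TC" "Ta \<subseteq> cov (take can L)"
    using padded_covering_array assms by blast
  have "cov (take can L) \<subseteq> cov L" by (rule covered_tuples_mono) (rule set_take_subset)
  then have "cov L = Ta" using L covered_tuples_subset by blast
  then show ?thesis using card_covered_tuples_le_Tcov[OF L(1,2)] Tcov_le_card[of N] by simp
qed

lemma card_covered_tuples_less_Tcov: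
  assumes "length L < N" "length L < can" "set L \<subseteq> TC"
  shows "card (cov L) < TN N"
proof -
  have "\<not> is_CA P d phi t L" using CAN_le_length assms(2) by fastforce
  then obtain tau where tau: "tau \<in> Ta" "tau \<notin> cov L" using is_CA_iff assms(3) by blast
  then obtain A where A: "A \<in> TC" "covers A tau" unfolding allowed_tuples_def by auto
  define L' where "L' = L @ replicate (N - length L) A"
  have L': "length L' = N" "set L' \<subseteq> TC" using assms A by (auto simp: L'_def)
  have "insert tau (cov L) \<subseteq> cov L'"
    using tau A assms(1) unfolding L'_def covered_tuples_def allowed_tuples_def by auto
  then have "card (insert tau (cov L)) \<le> card (cov L')"
    using covered_tuples_subset[OF L'(2)] finite_allowed_tuples by (meson card_mono finite_subset)
  moreover have "card (insert tau (cov L)) = Suc (card (cov L))"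
    using tau covered_tuples_subset[OF assms(3)] finite_allowed_tuples by (simp add: finite_subset)
  ultimately show ?thesis using card_covered_tuples_le_Tcov[OF L'] by linarith
qed

lemma falsified_weight_Psi_soft:
  "falsified_weight (Psi_soft P d phi t N lb) s =
     card {i\<in>{lb + 2..N}. s (U i)} + (N - (lb + 1) + 1) * card {tau\<in>Ta. \<not> s (C N tau)}"
proof -
  define u_clause :: "nat \<Rightarrow> ((('p, 'v) var \<Rightarrow> bool) \<Rightarrow> bool) \<times> nat"
    where "u_clause i = ((\<lambda>s. \<not> s (U i)), 1)" for i
  define c_clause :: "('p \<times> 'v) set \<Rightarrow> ((('p, 'v) var \<Rightarrow> bool) \<Rightarrow> bool) \<times> nat"
    where "c_clause tau = ((\<lambda>s. s (C N tau)), N - (lb + 1) + 1)" for tau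
  define Us where "Us = {i\<in>{lb + 2..N}. s (U i)}"
  define Cs where "Cs = {tau\<in>Ta. \<not> s (C N tau)}"
  have falsified: "{cw\<in>Psi_soft P d phi t N lb. \<not> fst cw s} = u_clause ` Us \<union> c_clause ` Cs"
    unfolding Psi_soft_def u_clause_def c_clause_def Us_def Cs_def by auto
  have "inj u_clause"
    by (rule injI) (auto simp: u_clause_def dest!: fun_cong[where x = "\<lambda>v. v = U _"])
  moreover have "inj c_clause"
    by (rule injI) (auto simp: c_clause_def dest!: fun_cong[where x = "\<lambda>v. v = C N _"])
  moreover have "u_clause ` Us \<inter> c_clause ` Cs = {}"
    by (auto simp: u_clause_def c_clause_def dest!: fun_cong[where x = "\<lambda>v. False"])
  moreover have "finite Us" "finite Cs" using finite_allowed_tuples by (auto simp: Us_def Cs_def)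
  ultimately have "sum snd (u_clause ` Us \<union> c_clause ` Cs) =
      sum (snd \<circ> u_clause) Us + sum (snd \<circ> c_clause) Cs"
    by (simp add: sum.union_disjoint sum.reindex inj_on_subset)
  then show ?thesis
    unfolding falsified_weight_def falsified Us_def[symmetric] Cs_def[symmetric]
    by (simp add: u_clause_def c_clause_def)
qed

text \<open>A tuple missed by L keeps every C i with i < length L true, so that it falsifies
  only its soft clause.\<close>
definition encode :: "('p \<Rightarrow> 'v) list \<Rightarrow> nat \<Rightarrow> ('p, 'v) var \<Rightarrow> bool" where
  "encode L k v = (case v of
       X i p w \<Rightarrow> (L ! (i - 1)) p = w
     | C i tau \<Rightarrow> (i < length L \<and> tau \<notin> cov L) \<or> (0 < i \<and> tau \<in> cov (take i L))
     | U i \<Rightarrow> i \<le> k)"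

lemma encode_C_step:
  assumes i: "i \<in> {1..length L}" and "(p, v) \<in> tau" and Ci: "encode L k (C i tau)"
  shows "encode L k (C (i - 1) tau) \<or> encode L k (X i p v)"
proof (cases "i < length L \<and> tau \<notin> cov L")
  case True
  then show ?thesis by (auto simp: encode_def)
next
  case False
  with Ci have "tau \<in> cov (take i L)" by (auto simp: encode_def)
  moreover have "cov (take i L) =
      cov (take (i - 1) L) \<union> {tau. is_tuple P d t tau \<and> covers (L ! (i - 1)) tau}"
    using covered_tuples_take_Suc[of "i - 1" L P d t] i by auto
  ultimately have "tau \<in> cov (take (i - 1) L) \<or> covers (L ! (i - 1)) tau" by blast
  then show ?thesis
  proof
    assume earlier: "tau \<in> cov (take (i - 1) L)"
    then have "i - 1 \<noteq> 0" by (metis covered_tuples_Nil empty_iff take_0)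
    with earlier show ?thesis by (simp add: encode_def)
  next
    assume "covers (L ! (i - 1)) tau"
    with \<open>(p, v) \<in> tau\<close> show ?thesis by (auto simp: encode_def covers_def)
  qed
qed

lemma encode_satisfies_Psi_hard:
  assumes L: "length L = N" "set L \<subseteq> TC" and prefix: "k \<le> N \<Longrightarrow> Ta \<subseteq> cov (take k L)"
  shows "\<forall>h\<in>Psi_hard P d phi t N lb. h (encode L k)"
proof -
  let ?s = "encode L k"
  have row: "L ! (i - 1) \<in> TC" if "i \<in> {1..N}" for i
    using that L by (auto intro: nth_mem)
  have X: "\<forall>i\<in>{1..N}. \<forall>p\<in>P. \<exists>!v. v \<in> d p \<and> ?s (X i p v)"
    using row by (auto simp: encode_def test_cases_def PiE_iff)
  have SUTX: "\<forall>i\<in>{1..N}. peval (\<lambda>(p, v). ?s (X i p v)) phi"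
    using row by (auto simp: encode_def test_cases_def)
  have a: "\<forall>i\<in>{1..N}. \<forall>tau\<in>Ta. \<forall>p v. (p, v) \<in> tau \<longrightarrow>
      ?s (C i tau) \<longrightarrow> ?s (C (i - 1) tau) \<or> ?s (X i p v)"
    using encode_C_step L(1) by blast
  have c: "\<forall>tau\<in>Ta. ?s (C N tau) \<longrightarrow> \<not> ?s (C 0 tau)"
    using L by (auto simp: encode_def)
  have BSU: "\<forall>i\<in>{lb + 2..N - 1}. ?s (U (i + 1)) \<longrightarrow> ?s (U i)"
    by (simp add: encode_def)
  have CCU: "\<forall>i\<in>{lb + 2..N}. \<forall>tau\<in>Ta. \<not> ?s (C (i - 1) tau) \<longrightarrow> ?s (U i)"
  proof (intro ballI impI)
    fix i tau assume i: "i \<in> {lb + 2..N}" and tau: "tau \<in> Ta" and "\<not> ?s (C (i - 1) tau)"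
    show "?s (U i)"
    proof (rule ccontr)
      assume "\<not> ?s (U i)"
      then have "k < i" by (simp add: encode_def)
      then have "tau \<in> cov (take (i - 1) L)"
        using i tau prefix covered_tuples_take_mono[of k "i - 1" P d t L] by force
      with i \<open>\<not> ?s (C (i - 1) tau)\<close> show False by (simp add: encode_def)
    qed
  qed
  show ?thesis
    unfolding satisfies_Psi_hard_iff by (intro conjI X SUTX a c BSU CCU)
qed

lemma falsified_weight_encode:
  assumes "length L = N" "set L \<subseteq> TC"
  shows "falsified_weight (Psi_soft P d phi t N lb) (encode L k) =
    min N k - (lb + 1) + (N - (lb + 1) + 1) * (card Ta - card (cov L))"
proof -
  have "{i\<in>{lb + 2..N}. encode L k (U i)} = {lb + 2..min N k}"
    by (auto simp: encode_def)
  moreover have "{tau\<in>Ta. \<not> encode L k (C N tau)} = Ta - cov L"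
    using assms(1) by (cases N) (auto simp: encode_def)
  moreover have "card (Ta - cov L) = card Ta - card (cov L)"
    using covered_tuples_subset[OF assms(2)] finite_allowed_tuples
    by (simp add: card_Diff_subset finite_subset)
  ultimately show ?thesis by (simp add: falsified_weight_Psi_soft)
qed

lemma Psi_optimum_attained:
  "\<exists>s. (\<forall>h\<in>Psi_hard P d phi t N lb. h s) \<and>
     falsified_weight (Psi_soft P d phi t N lb) s =
       min N can - (lb + 1) + (N - (lb + 1) + 1) * (card Ta - TN N)"
proof -
  obtain L where L: "length L = N" "set L \<subseteq> TC" "card (cov L) = TN N"
    and prefix: "can \<le> N \<Longrightarrow> Ta \<subseteq> cov (take can L)"
  proof (cases "can \<le> N")
    case True
    then obtain L where L: "length L = N" "set L \<subseteq> TC" "Ta \<subseteq> cov (take can L)"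
      by (rule padded_covering_array)
    have "cov (take can L) \<subseteq> cov L" by (rule covered_tuples_mono) (rule set_take_subset)
    with L covered_tuples_subset have "cov L = Ta" by blast
    then have "card (cov L) = TN N" using Tcov_eq_card_if_CAN_le[OF True] by simp
    with L show thesis by (intro that) auto
  next
    case False
    then show thesis using Tcov_attained that by blast
  qed
  have "\<forall>h\<in>Psi_hard P d phi t N lb. h (encode L can)"
    using L(1,2) prefix by (rule encode_satisfies_Psi_hard)
  moreover have "falsified_weight (Psi_soft P d phi t N lb) (encode L can) =
      min N can - (lb + 1) + (N - (lb + 1) + 1) * (card Ta - TN N)"
    using L by (simp add: falsified_weight_encode)
  ultimately show ?thesis by (intro exI[of _ "encode L can"] conjI)
qed

definition decode :: "(('p, 'v) var \<Rightarrow> bool) \<Rightarrow> nat \<Rightarrow> 'p \<Rightarrow> 'v" where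
  "decode s i p = (if p \<in> P then THE v. v \<in> d p \<and> s (X i p v) else undefined)"

lemma decode_eq_iff:
  assumes "\<exists>!v. v \<in> d p \<and> s (X i p v)" "p \<in> P" "v \<in> d p"
  shows "decode s i p = v \<longleftrightarrow> s (X i p v)"
  using theI'[OF assms(1)] assms by (auto simp: decode_def)

lemma decode_in_test_cases:
  assumes X: "\<forall>p\<in>P. \<exists>!v. v \<in> d p \<and> s (X i p v)" and sut: "peval (\<lambda>(p, v). s (X i p v)) phi"
  shows "decode s i \<in> TC"
proof -
  have "decode s i p \<in> d p" if "p \<in> P" for p
    using theI'[OF bspec[OF X that]] that by (simp add: decode_def)
  moreover have "decode s i p = undefined" if "p \<notin> P" for p
    using that by (simp add: decode_def)
  ultimately have "decode s i \<in> PiE P d" by (simp add: PiE_iff extensional_def)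
  moreover have "peval (\<lambda>(p, v). decode s i p = v) phi = peval (\<lambda>(p, v). s (X i p v)) phi"
  proof (rule peval_cong)
    fix a assume "a \<in> set_pform phi"
    then obtain p v where "a = (p, v)" "p \<in> P" "v \<in> d p"
      using sut_model unfolding sut_model_def by auto
    with X show "(case a of (p, v) \<Rightarrow> decode s i p = v) = (case a of (p, v) \<Rightarrow> s (X i p v))"
      by (simp add: decode_eq_iff)
  qed
  ultimately show ?thesis using sut by (simp add: test_cases_def)
qed

lemma decoded_rows_in_test_cases:
  assumes s: "\<forall>h\<in>Psi_hard P d phi t N lb. h s" and "j \<le> N"
  shows "set (map (decode s) [1..<Suc j]) \<subseteq> TC"
proof -
  obtain X: "\<forall>i\<in>{1..N}. \<forall>p\<in>P. \<exists>!v. v \<in> d p \<and> s (X i p v)"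
    and SUTX: "\<forall>i\<in>{1..N}. peval (\<lambda>(p, v). s (X i p v)) phi"
    using s unfolding satisfies_Psi_hard_iff by (elim conjE) (rule that; assumption)
  have "decode s i \<in> TC" if "i \<in> {1..N}" for i
    using decode_in_test_cases[OF bspec[OF X that] bspec[OF SUTX that]] .
  with \<open>j \<le> N\<close> show ?thesis by auto
qed

lemma decoded_rows_cover:
  assumes s: "\<forall>h\<in>Psi_hard P d phi t N lb. h s" and tau: "tau \<in> Ta" "s (C N tau)"
  shows "j \<le> N \<Longrightarrow> s (C j tau) \<Longrightarrow> tau \<in> cov (map (decode s) [1..<Suc j])"
proof -
  obtain X: "\<forall>i\<in>{1..N}. \<forall>p\<in>P. \<exists>!v. v \<in> d p \<and> s (X i p v)"
    and a: "\<forall>i\<in>{1..N}. \<forall>tau\<in>Ta. \<forall>p v. (p, v) \<in> tau \<longrightarrow>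
      s (C i tau) \<longrightarrow> s (C (i - 1) tau) \<or> s (X i p v)"
    and c: "\<forall>tau\<in>Ta. s (C N tau) \<longrightarrow> \<not> s (C 0 tau)"
    using s unfolding satisfies_Psi_hard_iff by (elim conjE) (rule that; assumption)
  show "j \<le> N \<Longrightarrow> s (C j tau) \<Longrightarrow> tau \<in> cov (map (decode s) [1..<Suc j])"
  proof (induction j)
    case 0
    with c tau show ?case by simp
  next
    case (Suc j)
    show ?case
    proof (cases "s (C j tau)")
      case True
      with Suc have "tau \<in> cov (map (decode s) [1..<Suc j])" by simp
      then show ?thesis by (rule subsetD[OF covered_tuples_mono, rotated]) auto
    next
      case False
      have "decode s (Suc j) p = v" if "(p, v) \<in> tau" for p v
      proof -
        have "p \<in> P" "v \<in> d p"
          using tau that unfolding allowed_tuples_def is_tuple_def by auto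
        moreover have "s (X (Suc j) p v)" using a tau Suc.prems False that by fastforce
        ultimately show ?thesis using X Suc.prems(1) by (simp add: decode_eq_iff)
      qed
      then have "covers (decode s (Suc j)) tau" by (auto simp: covers_def)
      then show ?thesis
        using tau unfolding covered_tuples_def allowed_tuples_def by auto
    qed
  qed
qed

lemma satisfied_tuples_covered:
  assumes s: "\<forall>h\<in>Psi_hard P d phi t N lb. h s" and "j \<le> N"
    and stop: "j < N \<Longrightarrow> lb + 1 \<le> j \<and> \<not> s (U (Suc j))"
  shows "{tau\<in>Ta. s (C N tau)} \<subseteq> cov (map (decode s) [1..<Suc j])"
proof
  fix tau assume "tau \<in> {tau\<in>Ta. s (C N tau)}"
  then have tau: "tau \<in> Ta" "s (C N tau)" by auto
  have CCU: "\<forall>i\<in>{lb + 2..N}. \<forall>tau\<in>Ta. \<not> s (C (i - 1) tau) \<longrightarrow> s (U i)"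
    using s unfolding satisfies_Psi_hard_iff by (elim conjE)
  have "s (C j tau)"
  proof (cases "j = N")
    case False
    with stop \<open>j \<le> N\<close> have "Suc j \<in> {lb + 2..N}" "\<not> s (U (Suc j))" by auto
    with CCU tau(1) show ?thesis by fastforce
  qed (use tau in simp)
  then show "tau \<in> cov (map (decode s) [1..<Suc j])"
    using decoded_rows_cover[OF s tau] \<open>j \<le> N\<close> by blast
qed

lemma Psi_cost_lower_bound:
  assumes lb: "lb + 1 \<le> N" and s: "\<forall>h\<in>Psi_hard P d phi t N lb. h s"
  shows "min N can - (lb + 1) + (N - (lb + 1) + 1) * (card Ta - TN N)
    \<le> falsified_weight (Psi_soft P d phi t N lb) s"
proof -
  let ?M = "N - (lb + 1) + 1"
  let ?Us = "{i\<in>{lb + 2..N}. s (U i)}"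
  define K where "K = {tau\<in>Ta. s (C N tau)}"
  obtain j where j: "lb + 1 \<le> j" "j \<le> N" "\<forall>k\<in>{lb + 1<..j}. s (U k)"
    "j < N \<Longrightarrow> \<not> s (U (Suc j))"
    using maximal_run[OF lb] by blast
  define rows where "rows = map (decode s) [1..<Suc j]"
  have rows: "length rows = j" "set rows \<subseteq> TC"
    using decoded_rows_in_test_cases[OF s j(2)] by (simp_all add: rows_def)
  have "K \<subseteq> cov rows"
    unfolding K_def rows_def using j by (intro satisfied_tuples_covered[OF s]) auto
  then have K_le: "card K \<le> card (cov rows)"
    using covered_tuples_subset[OF rows(2)] finite_allowed_tuples
    by (meson card_mono finite_subset)
  have "card {lb + 1<..j} \<le> card ?Us" using j by (intro card_mono) auto
  then have U_count: "j - (lb + 1) \<le> card ?Us" by simp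
  have "{tau\<in>Ta. \<not> s (C N tau)} = Ta - K" by (auto simp: K_def)
  moreover have "card (Ta - K) = card Ta - card K"
    using finite_allowed_tuples by (simp add: K_def card_Diff_subset)
  ultimately have weight:
    "falsified_weight (Psi_soft P d phi t N lb) s = card ?Us + ?M * (card Ta - card K)"
    by (simp add: falsified_weight_Psi_soft)
  consider "can \<le> j" | "j < can" "j < N" | "j < can" "j = N" using j(2) by linarith
  then show ?thesis
  proof cases
    case 1
    then show ?thesis using Tcov_eq_card_if_CAN_le[of N] j(2) U_count weight by simp
  next
    case 2
    then have "card (cov rows) < TN N"
      using rows by (intro card_covered_tuples_less_Tcov) auto
    with K_le have "card Ta - TN N + 1 \<le> card Ta - card K"
      using Tcov_le_card[of N] by linarith
    from mult_le_mono2[OF this, of ?M]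
    have "?M * (card Ta - TN N) + ?M \<le> ?M * (card Ta - card K)"
      by (simp only: distrib_left mult_1_right)
    then show ?thesis using weight by linarith
  next
    case 3
    then have "card K \<le> TN N"
      using K_le card_covered_tuples_le_Tcov[OF rows] by simp
    then have "?M * (card Ta - TN N) \<le> ?M * (card Ta - card K)"
      by (intro mult_le_mono2 diff_le_mono2)
    then show ?thesis using weight U_count 3 by linarith
  qed
qed

lemma Psi_optimal_cost:
  assumes "lb + 1 \<le> N"
  shows "wpms_cost (Psi_hard P d phi t N lb) (Psi_soft P d phi t N lb) =
    enat (min N can - (lb + 1) + (N - (lb + 1) + 1) * (card Ta - TN N))"
  using Psi_optimum_attained Psi_cost_lower_bound[OF assms] by (metis wpms_cost_eqI)

end

lemma nat_of_int_cost:
  fixes a b c l k :: nat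
  assumes "l < c" "b \<le> a"
  shows "nat (int c - (int l + 1) + (int a - int b) * (int k + 1)) =
    c - (l + 1) + (k + 1) * (a - b)"
proof -
  obtain f e where "c = Suc (l + f)" "a = b + e"
    using assms less_imp_Suc_add le_Suc_ex by metis
  then have "int c - (int l + 1) + (int a - int b) * (int k + 1) =
      int (c - (l + 1) + (k + 1) * (a - b))"
    by (simp add: algebra_simps)
  then show ?thesis by (simp only: nat_int)
qed

theorem proposition12:
  fixes P :: "'p set" and d :: "'p \<Rightarrow> 'v set" and phi :: "('p \<times> 'v) pform"
    and t N lb :: nat
  assumes "sut_model P d phi"
    and "test_cases P d phi \<noteq> {}"
    and "1 \<le> t" and "t \<le> card P"
    and "1 \<le> N"
    and "lb < CAN P d phi t" and "lb + 1 \<le> N"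
  shows "wpms_cost (Psi_hard P d phi t N lb) (Psi_soft P d phi t N lb) =
    (let m = N - (lb + 1);
         Ta = card (allowed_tuples P d phi t);
         TN = Tcov P d phi t N;
         can = CAN P d phi t
     in if can \<le> N
        then enat (nat (int can - (int lb + 1) + (int Ta - int TN) * (int m + 1)))
        else enat (nat (int N - (int lb + 1) + (int Ta - int TN) * (int m + 1))))"
proof -
  interpret sut P d phi t using assms(1,2) by unfold_locales
  have TN_le: "TN N \<le> card Ta" by (rule Tcov_le_card)
  have "lb < N" using assms(7) by simp
  show ?thesis
    unfolding Psi_optimal_cost[OF assms(7)] Let_def
      nat_of_int_cost[OF assms(6) TN_le] nat_of_int_cost[OF \<open>lb < N\<close> TN_le]
    by (simp add: min_def)
qed

end
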